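(* The class of data languages accepted by SAFA is not closed under homomorphism: there exist a data language $L\subseteq(\Sigma\times D)^*$ accepted by some SAFA and a homomorphism $h:(\Sigma\times D)^*\to(\Sigma\times D)^*$ such that no SAFA accepts $h(L)=\{h(w): w\in L\}$.
   Context: $D$ is a fixed countably infinite set of data values; for a finite alphabet $\Sigma$, data words are elements of $(\Sigma\times D)^*$. A homomorphism of data words is a monoid homomorphism $h:(\Sigma\times D)^*\to(\Sigma\times D)^*$, i.e. $h(\varepsilon)=\varepsilon$ and $h(uv)=h(u)h(v)$, determined by the images $h((a,d))$ of single letters. A set augmented finite automaton (SAFA) is a tuple $M=(Q,\Sigma\times D,q_0,F,H,\delta)$: $Q$ finite set of states, $q_0\in Q$ initial, $F\subseteq Q$ final, $H=\{h_1,\dots,h_m\}$ a finite collection of (names of) sets of data values, $\delta\subseteq Q\times\Sigma\times C\times OP\times Q$ with $C=\{p(h_i),\,!p(h_i)\}$, $OP=\{-\}\cup\{\mathsf{ins}(h_i)\}$. Configurations are $(q,\langle S_1,\dots,S_m\rangle)$ with $S_i\subseteq D$ finite; initially state $q_0$ and all sets empty. On reading $(a,d)$, a transition $(q,a,\alpha,op,q')$ from the current state may be taken if $\alpha=p(h_i)$ and $d\in S_i$, or $\alpha=\,!p(h_i)$ and $d\notin S_i$; then the state becomes $q'$ and if $op=\mathsf{ins}(h_j)$ the value $d$ is added to $S_j$ ($op=-$ changes nothing). A word is accepted if some run reads it entirely and ends in $F$. *)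

theory Defs
  imports Main
begin

text \<open>Data values D are modelled by the countably infinite type nat; letters of the
finite alphabet Sigma are drawn from nat as well (Sigma is an explicit finite set).
States of an automaton are a finite set of naturals; the sets h_1..h_m are indexed 0..<m.\<close>

type_synonym dword = "(nat \<times> nat) list"

datatype cond = Pmem nat | NPmem nat
datatype oper = NoOp | Ins nat

record safa =
  states :: "nat set"
  alpha  :: "nat set"
  init   :: nat
  final  :: "nat set"
  nsets  :: nat
  delta  :: "(nat \<times> nat \<times> cond \<times> oper \<times> nat) set"

fun cond_idx :: "cond \<Rightarrow> nat" where
  "cond_idx (Pmem i) = i" | "cond_idx (NPmem i) = i"

fun oper_ok :: "nat \<Rightarrow> oper \<Rightarrow> bool" where
  "oper_ok m NoOp = True" | "oper_ok m (Ins j) = (j < m)"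

definition wf_safa :: "safa \<Rightarrow> bool" where
  "wf_safa M \<longleftrightarrow> finite (states M) \<and> finite (alpha M) \<and> init M \<in> states M
     \<and> final M \<subseteq> states M
     \<and> (\<forall>(q, a, c, op, q') \<in> delta M. q \<in> states M \<and> a \<in> alpha M
           \<and> cond_idx c < nsets M \<and> oper_ok (nsets M) op \<and> q' \<in> states M)"

fun cond_holds :: "cond \<Rightarrow> nat \<Rightarrow> (nat \<Rightarrow> nat set) \<Rightarrow> bool" where
  "cond_holds (Pmem i) d S = (d \<in> S i)"
| "cond_holds (NPmem i) d S = (d \<notin> S i)"

fun apply_op :: "oper \<Rightarrow> nat \<Rightarrow> (nat \<Rightarrow> nat set) \<Rightarrow> (nat \<Rightarrow> nat set)" where
  "apply_op NoOp d S = S"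
| "apply_op (Ins j) d S = S(j := insert d (S j))"

type_synonym config = "nat \<times> (nat \<Rightarrow> nat set)"

definition step :: "safa \<Rightarrow> config \<Rightarrow> nat \<times> nat \<Rightarrow> config \<Rightarrow> bool" where
  "step M c x c' \<longleftrightarrow> (\<exists>\<alpha> op. (fst c, fst x, \<alpha>, op, fst c') \<in> delta M
      \<and> cond_holds \<alpha> (snd x) (snd c) \<and> snd c' = apply_op op (snd x) (snd c))"

inductive run :: "safa \<Rightarrow> config \<Rightarrow> dword \<Rightarrow> config \<Rightarrow> bool" for M where
  run_nil: "run M c [] c"
| run_cons: "step M c x c' \<Longrightarrow> run M c' w c'' \<Longrightarrow> run M c (x # w) c''"

definition lang :: "safa \<Rightarrow> dword set" where
  "lang M = {w. \<exists>q S. run M (init M, \<lambda>_. {}) w (q, S) \<and> q \<in> final M}"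

definition hom :: "(nat \<times> nat \<Rightarrow> dword) \<Rightarrow> dword \<Rightarrow> dword" where
  "hom f w = concat (map f w)"

end

theory Submission
  imports Defs
begin

text \<open>Let L be the set of all words over the one-letter alphabet and let the homomorphism
double every letter; then the image consists of the words (a,d_1)(a,d_1)(a,d_2)(a,d_2)... .
Suppose a SAFA with m sets accepted it, and follow an accepting run on a word with m+1 distinct
values b_0 < b_1 < ... . At the second occurrence of b_i the transition tests b_i against a set.
A test !p(h_k) is also passed by a fresh value, and a test p(h_k) by any older value already in
h_k; as the value read is never seen again, the rest of the run is unaffected, and the run accepts
a word that is not doubled. The only remaining case is a test p(h_k) with h_k = {b_i}, which means
that h_k was empty before b_i was read; this can happen at most m times.\<close>

fun doubled :: "dword \<Rightarrow> bool" where
  "doubled [] = True"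
| "doubled [x] = False"
| "doubled (x # y # w) = (x = y \<and> doubled w)"

definition double :: "nat \<times> nat \<Rightarrow> dword" where
  "double x = [x, x]"

lemma doubled_hom_double: "doubled (hom double w)"
  by (induction w) (auto simp: hom_def double_def)

definition doubled_word :: "nat \<Rightarrow> nat \<Rightarrow> nat \<Rightarrow> dword" where
  "doubled_word a b n = hom double (map (Pair a) [b..<b+n])"

lemma doubled_word_Suc:
  "doubled_word a b (Suc n) = (a, b) # (a, b) # doubled_word a (Suc b) n"
  by (simp add: doubled_word_def hom_def double_def upt_conv_Cons)

lemma data_doubled_word: "snd ` set (doubled_word a b n) = {b..<b+n}"
  by (force simp: doubled_word_def hom_def double_def)

definition filled_sets :: "nat \<Rightarrow> (nat \<Rightarrow> nat set) \<Rightarrow> nat set" where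
  "filled_sets m S = {j. j < m \<and> S j \<noteq> {}}"

lemma card_filled_sets_le: "card (filled_sets m S) \<le> m"
  using card_mono[of "{..<m}" "filled_sets m S"] by (auto simp: filled_sets_def)

lemma card_filled_sets_less:
  assumes "\<And>j. S j \<subseteq> T j" and "S k = {}" and "T k \<noteq> {}" and "k < m"
  shows "card (filled_sets m S) < card (filled_sets m T)"
proof (rule psubset_card_mono)
  show "finite (filled_sets m T)" by (simp add: filled_sets_def)
  have "filled_sets m S \<subseteq> filled_sets m T"
    using assms(1) by (auto simp: filled_sets_def)
  moreover have "k \<in> filled_sets m T - filled_sets m S"
    using assms(2-4) by (simp add: filled_sets_def)
  ultimately show "filled_sets m S \<subset> filled_sets m T" by blast
qed

lemma apply_op_mono: "S j \<subseteq> apply_op op d S j"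
  by (cases op) auto

lemma apply_op_subset: "(\<And>i. S i \<subseteq> A) \<Longrightarrow> d \<in> A \<Longrightarrow> apply_op op d S j \<subseteq> A"
  by (cases op) auto

lemma run_Cons_iff: "run M c (x # w) c'' \<longleftrightarrow> (\<exists>c'. step M c x c' \<and> run M c' w c'')"
  using run.simps[of M c "x # w" c''] by auto

lemma step_iff_transition:
  "step M (q, S) (a, d) (q', S') \<longleftrightarrow>
     (\<exists>\<alpha> op. (q, a, \<alpha>, op, q') \<in> delta M \<and> cond_holds \<alpha> d S \<and> S' = apply_op op d S)"
  by (simp add: step_def)

lemma run_agreeing_sets:
  assumes "run M c w c'" and "\<forall>j. \<forall>d \<in> snd ` set w. d \<in> snd c j \<longleftrightarrow> d \<in> T j"
  shows "\<exists>T'. run M (fst c, T) w (fst c', T')"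
  using assms
proof (induction arbitrary: T rule: run.induct)
  case (run_nil c)
  then show ?case by (auto intro: run.run_nil)
next
  case (run_cons c x c' w c'')
  from run_cons.hyps(1) obtain \<alpha> op where
    transition: "(fst c, fst x, \<alpha>, op, fst c') \<in> delta M" and
    holds: "cond_holds \<alpha> (snd x) (snd c)" and c': "snd c' = apply_op op (snd x) (snd c)"
    unfolding step_def by blast
  define T1 where "T1 = apply_op op (snd x) T"
  have "cond_holds \<alpha> (snd x) T" using holds run_cons.prems by (cases \<alpha>) auto
  then have "step M (fst c, T) x (fst c', T1)"
    unfolding step_def T1_def using transition by auto
  moreover have "\<forall>j. \<forall>d \<in> snd ` set w. d \<in> snd c' j \<longleftrightarrow> d \<in> T1 j"
    using run_cons.prems unfolding c' T1_def by (cases op) auto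
  then obtain T' where "run M (fst c', T1) w (fst c'', T')" using run_cons.IH by blast
  ultimately show ?case by (auto intro: run.run_cons)
qed

lemma run_replace_value:
  assumes transition: "(q1, a, \<alpha>, op, q2) \<in> delta M"
    and r: "run M (q2, apply_op op x S) w (q', S')"
    and holds: "cond_holds \<alpha> y S"
    and "x \<notin> snd ` set w" and "y \<notin> snd ` set w"
  shows "\<exists>S''. run M (q1, S) ((a, y) # w) (q', S'')"
proof -
  have "\<forall>j. \<forall>e \<in> snd ` set w. e \<in> apply_op op x S j \<longleftrightarrow> e \<in> apply_op op y S j"
    using assms(4,5) by (cases op) auto
  then obtain T' where "run M (q2, apply_op op y S) w (q', T')"
    using run_agreeing_sets[OF r] by fastforce
  moreover have "step M (q1, S) (a, y) (q2, apply_op op y S)"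
    using transition holds by (auto simp: step_def)
  ultimately show ?thesis by (auto intro: run.run_cons)
qed

lemma replacement_value_exists:
  assumes "cond_holds \<alpha> b S" and "\<And>j. S j \<subseteq> {..b}"
  obtains y where "y < b \<or> y > b + n" and "cond_holds \<alpha> y S"
  | k where "\<alpha> = Pmem k" and "S k = {b}"
proof (cases \<alpha>)
  case (NPmem k)
  have "Suc (b + n) \<notin> S k" using assms(2) by fastforce
  then show ?thesis using that(1)[of "Suc (b + n)"] NPmem by simp
next
  case (Pmem k)
  show ?thesis
  proof (cases "S k = {b}")
    case False
    then obtain e where "e \<in> S k" and "e \<noteq> b" using assms(1) Pmem by auto
    moreover have "e \<le> b" using \<open>e \<in> S k\<close> assms(2) by auto
    ultimately show ?thesis using that(1)[of e] Pmem by simp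
  qed (use that(2) Pmem in blast)
qed

lemma card_filled_sets_less_Pmem:
  assumes "wf_safa M" and "(q, a, Pmem k, op, q') \<in> delta M"
    and "apply_op op1 b S k = {b}" and "b \<notin> S k"
  shows "card (filled_sets (nsets M) S)
    < card (filled_sets (nsets M) (apply_op op b (apply_op op1 b S)))"
proof (rule card_filled_sets_less)
  show "k < nsets M" using assms(1,2) unfolding wf_safa_def by fastforce
  show "S k = {}" using assms(3,4) apply_op_mono[of S k op1 b] by auto
  show "S j \<subseteq> apply_op op b (apply_op op1 b S) j" for j
    by (meson apply_op_mono order_trans)
  show "apply_op op b (apply_op op1 b S) k \<noteq> {}"
    using assms(3) apply_op_mono[of "apply_op op1 b S" k op b] by auto
qed

lemma undoubled_run_from_doubled_word:
  assumes wf: "wf_safa M"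
  shows "run M (q, S) (doubled_word a b n) (q', S') \<Longrightarrow> (\<And>j. S j \<subseteq> {..<b}) \<Longrightarrow>
    card (filled_sets (nsets M) S) + n > nsets M \<Longrightarrow>
    \<exists>w S''. run M (q, S) w (q', S'') \<and> \<not> doubled w"
proof (induction n arbitrary: b q S)
  case 0
  then show ?case using card_filled_sets_le[of "nsets M" S] by simp
next
  case (Suc n b q S)
  let ?rest = "doubled_word a (Suc b) n"
  from Suc.prems(1) obtain q1 S1 q2 S2 where
    first: "step M (q, S) (a, b) (q1, S1)" and second: "step M (q1, S1) (a, b) (q2, S2)" and
    rest: "run M (q2, S2) ?rest (q', S')"
    unfolding doubled_word_Suc run_Cons_iff by auto
  from first obtain op1 where S1: "S1 = apply_op op1 b S"
    by (auto simp: step_iff_transition)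
  from second obtain \<alpha> op where transition: "(q1, a, \<alpha>, op, q2) \<in> delta M" and
    holds: "cond_holds \<alpha> b S1" and S2: "S2 = apply_op op b S1"
    by (auto simp: step_iff_transition)
  have rest_data: "snd ` set ?rest = {Suc b..<Suc b + n}" by (rule data_doubled_word)
  have S_le: "S j \<subseteq> {..b}" for j using Suc.prems(2)[of j] by auto
  have "S1 j \<subseteq> {..b}" for j
    unfolding S1 using S_le by (intro apply_op_subset) auto
  then consider y where "y < b \<or> y > b + n" "cond_holds \<alpha> y S1"
    | k where "\<alpha> = Pmem k" "S1 k = {b}"
    using replacement_value_exists holds by metis
  then show ?case
  proof cases
    case (1 y)
    then obtain S'' where "run M (q1, S1) ((a, y) # ?rest) (q', S'')"
      using run_replace_value[OF transition rest[unfolded S2]] rest_data by force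
    then have "run M (q, S) ((a, b) # (a, y) # ?rest) (q', S'')"
      using first by (auto intro: run.run_cons)
    moreover have "\<not> doubled ((a, b) # (a, y) # ?rest)" using 1 by auto
    ultimately show ?thesis by blast
  next
    case (2 k)
    have "b \<notin> S k" using Suc.prems(2)[of k] by auto
    then have "card (filled_sets (nsets M) S) < card (filled_sets (nsets M) S2)"
      using card_filled_sets_less_Pmem[OF wf] transition 2 unfolding S1 S2 by blast
    moreover have "S2 j \<subseteq> {..<Suc b}" for j
      unfolding lessThan_Suc_atMost S2 S1 using S_le by (intro apply_op_subset) auto
    ultimately obtain w S'' where "run M (q2, S2) w (q', S'')" and "\<not> doubled w"
      using Suc.IH[OF rest] Suc.prems(3) by fastforce
    then show ?thesis using first second
      by (intro exI[of _ "(a, b) # (a, b) # w"]) (auto intro: run.run_cons)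
  qed
qed

lemma safa_lang_not_doubled:
  assumes "wf_safa M" and "\<And>n. doubled_word a 0 n \<in> lang M"
  shows "\<exists>w \<in> lang M. \<not> doubled w"
proof -
  obtain q S where run: "run M (init M, \<lambda>_. {}) (doubled_word a 0 (Suc (nsets M))) (q, S)"
    and "q \<in> final M"
    using assms(2) unfolding lang_def by blast
  moreover obtain w S'' where "run M (init M, \<lambda>_. {}) w (q, S'')" and "\<not> doubled w"
    using undoubled_run_from_doubled_word[OF assms(1) run] by auto
  ultimately show ?thesis unfolding lang_def by blast
qed

definition universal_safa :: safa where
  "universal_safa = \<lparr>states = {0}, alpha = {0}, init = 0, final = {0}, nsets = 1,
     delta = {(0, 0, Pmem 0, NoOp, 0), (0, 0, NPmem 0, NoOp, 0)}\<rparr>"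

lemma wf_universal_safa: "wf_safa universal_safa"
  by (simp add: wf_safa_def universal_safa_def)

lemma run_universal_safa: "run universal_safa (0, S) (map (Pair 0) ds) (0, S)"
proof (induction ds)
  case Nil
  then show ?case by (simp add: run.run_nil)
next
  case (Cons d ds)
  have "step universal_safa (0, S) (0, d) (0, S)"
    by (cases "d \<in> S 0") (force simp: step_def universal_safa_def)+
  then show ?case using Cons by (auto intro: run.run_cons)
qed

lemma map_Pair_in_lang_universal_safa: "map (Pair 0) ds \<in> lang universal_safa"
  using run_universal_safa by (auto simp: lang_def universal_safa_def)

theorem theorem9:
  shows "\<exists>Sigma :: nat set. finite Sigma \<and>
    (\<exists>M f. wf_safa M \<and> alpha M = Sigma
       \<and> (\<forall>a\<in>Sigma. \<forall>d. set (f (a, d)) \<subseteq> Sigma \<times> UNIV)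
       \<and> \<not> (\<exists>M'. wf_safa M' \<and> alpha M' = Sigma \<and> lang M' = hom f ` lang M))"
proof (intro exI conjI)
  show "wf_safa universal_safa" by (rule wf_universal_safa)
  show "alpha universal_safa = {0}" by (simp add: universal_safa_def)
  show "\<forall>a\<in>{0}. \<forall>d. set (double (a, d)) \<subseteq> {0} \<times> UNIV" by (simp add: double_def)
  show "\<not> (\<exists>M'. wf_safa M' \<and> alpha M' = {0} \<and> lang M' = hom double ` lang universal_safa)"
  proof
    assume "\<exists>M'. wf_safa M' \<and> alpha M' = {0} \<and> lang M' = hom double ` lang universal_safa"
    then obtain M' where wf: "wf_safa M'" and L: "lang M' = hom double ` lang universal_safa"
      by blast
    have "doubled_word 0 0 n \<in> lang M'" for n
      unfolding L doubled_word_def using map_Pair_in_lang_universal_safa by blast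
    then show False
      using safa_lang_not_doubled[OF wf] doubled_hom_double unfolding L by blast
  qed
qed simp

end
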